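(* Let $\mathcal{P}\subset\mathbb{R}^n$ be a convex polytope, symmetric about the origin with nonempty interior, that tiles $\mathbb{R}^n$ by translation, and let $\Vert\cdot\Vert_{\mathcal{P}}$ be the associated norm. Then $m_1(\mathbb{R}^n,\Vert\cdot\Vert_{\mathcal{P}})\geq\frac{1}{2^n}$.
   Context: $\Vert x\Vert_{\mathcal{P}}=\inf\{\lambda\geq0:x\in\lambda\mathcal{P}\}$. $\mathcal{P}$ tiles $\mathbb{R}^n$ by translation if there is $\Lambda\subset\mathbb{R}^n$ with $\bigcup_{\lambda\in\Lambda}(\lambda+\mathcal{P})=\mathbb{R}^n$ and the interiors of $\lambda+\mathcal{P}$ and $\lambda'+\mathcal{P}$ are disjoint for $\lambda\ne\lambda'$. A set $A$ avoids distance $1$ if $\Vert x-y\Vert\neq1$ for all $x,y\in A$. The density of a measurable $A$ is $\delta(A)=\limsup_{R\to\infty}\operatorname{Vol}(A\cap[-R,R]^n)/\operatorname{Vol}([-R,R]^n)$, and $m_1(\mathbb{R}^n,\Vert\cdot\Vert)$ is the supremum of $\delta(A)$ over measurable $A$ avoiding distance $1$. *)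

theory Defs
  imports "HOL-Analysis.Analysis"
begin

definition gauge_norm :: "'a::euclidean_space set \<Rightarrow> 'a \<Rightarrow> real" where
  "gauge_norm P x = Inf {l. l \<ge> 0 \<and> x \<in> (\<lambda>y. l *\<^sub>R y) ` P}"

definition tiles_by_translation :: "'a::euclidean_space set \<Rightarrow> bool" where
  "tiles_by_translation P \<longleftrightarrow> (\<exists>\<Lambda>. (\<Union>t\<in>\<Lambda>. (\<lambda>y. t + y) ` P) = UNIV \<and>
     (\<forall>t\<in>\<Lambda>. \<forall>t'\<in>\<Lambda>. t \<noteq> t' \<longrightarrow>
        interior ((\<lambda>y. t + y) ` P) \<inter> interior ((\<lambda>y. t' + y) ` P) = {}))"

definition avoids_distance_one :: "('a::euclidean_space \<Rightarrow> real) \<Rightarrow> 'a set \<Rightarrow> bool" where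
  "avoids_distance_one nrm A \<longleftrightarrow> (\<forall>x\<in>A. \<forall>y\<in>A. nrm (x - y) \<noteq> 1)"

definition upper_density :: "'a::euclidean_space set \<Rightarrow> ereal" where
  "upper_density A = Limsup at_top (\<lambda>R::real.
     ereal (measure lebesgue (A \<inter> cbox (- (R *\<^sub>R One)) (R *\<^sub>R One))
            / measure lebesgue (cbox (- (R *\<^sub>R One)) (R *\<^sub>R (One::'a)))))"

definition m1 :: "('a::euclidean_space \<Rightarrow> real) \<Rightarrow> ereal" where
  "m1 nrm = Sup {upper_density A | A. A \<in> sets lebesgue \<and> avoids_distance_one nrm A}"

end

theory Submission
  imports Defs "HOL-Real_Asymp.Real_Asymp"
begin

(* Since P is symmetric and convex, the difference of two points of 1/2 int P lies in int P.
   Hence the union A of the half-sized open tiles t + 1/2 int P of the tiling avoids distance 1: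
   two points of the same half-tile are at distance < 1, while two points of different
   half-tiles t, t' differ by a point of the open set (t - t') + int P, which is disjoint from
   int P and therefore from P = closure (int P), so their distance is > 1. Each half-tile has
   2^-n times the volume of its tile, and a large cube with a boundary layer of width 2 max |P|
   removed is covered by the tiles inside the cube, so A has upper density at least 2^-n. *)

lemma half_diff_in_interior_if_symmetric:
  fixes P :: "'a::euclidean_space set"
  assumes "convex P" "uminus ` P = P" "a \<in> interior P" "b \<in> interior P"
  shows "(1/2) *\<^sub>R a - (1/2) *\<^sub>R b \<in> interior P"
proof -
  have "- b \<in> interior P"
    using assms(2,4) interior_negations[of P] by (metis imageI)
  then have "(1/2) *\<^sub>R a + (1/2) *\<^sub>R (- b) \<in> interior P"
    by (intro convexD[OF convex_interior[OF assms(1)] assms(3)]) auto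
  then show ?thesis by simp
qed

lemma zero_in_interior_if_symmetric:
  fixes P :: "'a::euclidean_space set"
  assumes "convex P" "uminus ` P = P" "interior P \<noteq> {}"
  shows "0 \<in> interior P"
proof -
  obtain a where "a \<in> interior P" using assms(3) by blast
  then show ?thesis using half_diff_in_interior_if_symmetric[OF assms(1,2)] by fastforce
qed

lemma half_scaled_interior_subset:
  fixes P :: "'a::euclidean_space set"
  assumes "convex P" "0 \<in> interior P"
  shows "(*\<^sub>R) (1/2) ` interior P \<subseteq> interior P"
proof
  fix x assume "x \<in> (*\<^sub>R) (1/2) ` interior P"
  then obtain a where a: "a \<in> interior P" "x = (1/2) *\<^sub>R a" by blast
  have "(1/2) *\<^sub>R a + (1/2) *\<^sub>R 0 \<in> interior P"
    by (intro convexD[OF convex_interior[OF assms(1)] a(1) assms(2)]) auto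
  then show "x \<in> interior P" using a(2) by simp
qed

lemma open_disjoint_interior_imp_disjoint:
  fixes P :: "'a::euclidean_space set"
  assumes "convex P" "interior P \<noteq> {}" "open U" "U \<inter> interior P = {}"
  shows "U \<inter> P = {}"
proof -
  have "P \<subseteq> closure (interior P)"
    using convex_closure_interior[OF assms(1,2)] closure_subset by blast
  then show ?thesis
    using open_Int_closure_eq_empty[OF assms(3)] assms(4) by blast
qed

lemma gauge_norm_less_one:
  fixes P :: "'a::euclidean_space set"
  assumes "z \<in> interior P"
  shows "gauge_norm P z < 1"
proof -
  obtain e where e: "e > 0" "ball z e \<subseteq> P" using assms mem_interior by blast
  define c where "c = norm z + 1"
  have c: "c > 0" "norm z \<le> c" by (simp_all add: c_def add_nonneg_pos)
  define d where "d = e / (2 * c)"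
  have d: "d > 0" using e c by (simp add: d_def)
  have "dist z ((1 + d) *\<^sub>R z) = d * norm z"
    using d by (simp add: dist_norm algebra_simps)
  also have "\<dots> \<le> d * c" using c d by simp
  also have "\<dots> < e" using e c by (simp add: d_def)
  finally have "(1 + d) *\<^sub>R z \<in> P" using e by auto
  with d have "z \<in> (\<lambda>y. (1 / (1 + d)) *\<^sub>R y) ` P"
    by (intro image_eqI[of _ _ "(1 + d) *\<^sub>R z"]) simp_all
  then have "1 / (1 + d) \<in> {l. l \<ge> 0 \<and> z \<in> (\<lambda>y. l *\<^sub>R y) ` P}"
    using d by simp
  then have "gauge_norm P z \<le> 1 / (1 + d)"
    unfolding gauge_norm_def by (rule cInf_lower) (auto simp: bdd_below_def)
  also have "\<dots> < 1" using d by simp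
  finally show ?thesis .
qed

lemma gauge_norm_eq_one_imp_mem:
  fixes P :: "'a::euclidean_space set"
  assumes "closed P" "0 \<in> interior P" "gauge_norm P z = 1"
  shows "z \<in> P"
proof -
  define S where "S = {l. l \<ge> 0 \<and> z \<in> (\<lambda>y. l *\<^sub>R y) ` P}"
  have Inf_S: "Inf S = 1" using assms(3) by (simp add: gauge_norm_def S_def)
  (* 0 \<in> interior P makes S nonempty, so that Inf S = 1 is not the junk value of Inf {}. *)
  obtain r where r: "r > 0" "ball 0 r \<subseteq> P" using assms(2) mem_interior by blast
  define c where "c = norm z + 1"
  have c: "c > 0" "norm z < c" by (simp_all add: c_def add_nonneg_pos)
  define l where "l = c / r"
  have l: "l > 0" using r c by (simp add: l_def)
  have "norm (z /\<^sub>R l) = norm z * r / c"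
    using c r by (simp add: l_def)
  also have "\<dots> < r" using r c by (simp add: field_simps)
  finally have "norm (z /\<^sub>R l) < r" .
  then have "z /\<^sub>R l \<in> P" using r by auto
  then have "l \<in> S"
    using l unfolding S_def by (auto intro!: image_eqI[of _ _ "z /\<^sub>R l"])
  then have "S \<noteq> {}" by blast
  have "\<exists>l\<in>S. l < 1 + inverse (Suc k)" for k :: nat
    using cInf_lessD[OF \<open>S \<noteq> {}\<close>, of "1 + inverse (Suc k)"] Inf_S by simp
  then obtain ls where ls: "\<And>k. ls k \<in> S" "\<And>k. ls k < 1 + inverse (Suc k)"
    by metis
  have ls_ge: "ls k \<ge> 1" for k
    using cInf_lower[OF ls(1), of k] Inf_S by (auto simp: S_def bdd_below_def)
  have "ls \<longlonglongrightarrow> 1"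
  proof (rule tendsto_sandwich[of "\<lambda>_. 1" _ _ "\<lambda>k. 1 + inverse (Suc k)"])
    show "(\<lambda>k. 1 + inverse (real (Suc k))) \<longlonglongrightarrow> 1"
      using tendsto_add[OF tendsto_const LIMSEQ_inverse_real_of_nat, of 1] by simp
  qed (use ls_ge ls(2) in \<open>auto intro: always_eventually less_imp_le\<close>)
  then have "(\<lambda>k. z /\<^sub>R ls k) \<longlonglongrightarrow> z /\<^sub>R 1"
    by (intro tendsto_intros) auto
  moreover have "z /\<^sub>R ls k \<in> P" for k
    using ls(1)[of k] ls_ge[of k] unfolding S_def by auto
  ultimately show ?thesis
    using closed_sequentially[OF assms(1), of "\<lambda>k. z /\<^sub>R ls k"] by simp
qed

definition half_tiling :: "'a::euclidean_space set \<Rightarrow> 'a set \<Rightarrow> 'a set" where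
  "half_tiling P \<Lambda> = (\<Union>t\<in>\<Lambda>. (+) t ` ((*\<^sub>R) (1/2) ` interior P))"

lemma open_half_tiling: "open (half_tiling P \<Lambda>)"
  unfolding half_tiling_def by (intro open_UN ballI open_translation open_scaling) auto

lemma half_tiling_in_sets_lebesgue: "half_tiling P \<Lambda> \<in> sets lebesgue"
  using open_half_tiling by (metis borel_open sets_completionI_sets sets_lborel)

lemma translate_interiors_disjoint:
  fixes P :: "'a::euclidean_space set"
  assumes "interior ((+) t ` P) \<inter> interior ((+) t' ` P) = {}"
  shows "(+) (t - t') ` interior P \<inter> interior P = {}"
proof -
  have "(+) t ` interior P \<inter> (+) t' ` interior P = {}"
    using assms by (simp add: interior_translation)
  then show ?thesis by (force simp: algebra_simps)
qed

lemma half_tiling_avoids_distance_one: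
  fixes P :: "'a::euclidean_space set"
  assumes "closed P" "convex P" "uminus ` P = P" "interior P \<noteq> {}"
    and disj: "\<And>t t'. t \<in> \<Lambda> \<Longrightarrow> t' \<in> \<Lambda> \<Longrightarrow> t \<noteq> t' \<Longrightarrow>
      interior ((+) t ` P) \<inter> interior ((+) t' ` P) = {}"
  shows "avoids_distance_one (gauge_norm P) (half_tiling P \<Lambda>)"
  unfolding avoids_distance_one_def
proof (intro ballI notI)
  fix x y assume "x \<in> half_tiling P \<Lambda>" "y \<in> half_tiling P \<Lambda>"
    and xy: "gauge_norm P (x - y) = 1"
  then obtain t a t' b where t: "t \<in> \<Lambda>" "t' \<in> \<Lambda>"
    and ab: "a \<in> interior P" "b \<in> interior P"
    and "x = t + (1/2) *\<^sub>R a" "y = t' + (1/2) *\<^sub>R b"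
    unfolding half_tiling_def by blast
  then have diff: "x - y = (t - t') + ((1/2) *\<^sub>R a - (1/2) *\<^sub>R b)"
    by (simp add: algebra_simps)
  have c: "(1/2) *\<^sub>R a - (1/2) *\<^sub>R b \<in> interior P"
    using half_diff_in_interior_if_symmetric[OF assms(2,3) ab] .
  show False
  proof (cases "t = t'")
    case True
    then show False using gauge_norm_less_one[of "x - y" P] diff c xy by simp
  next
    case False
    have "x - y \<in> P"
      using gauge_norm_eq_one_imp_mem[OF assms(1) _ xy] zero_in_interior_if_symmetric assms(2-4)
      by blast
    moreover have "(+) (t - t') ` interior P \<inter> P = {}"
      using open_disjoint_interior_imp_disjoint[OF assms(2,4)] open_translation[OF open_interior]
        translate_interiors_disjoint[OF disj[OF t False]] by blast
    ultimately show False using diff c by blast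
  qed
qed

definition cube :: "real \<Rightarrow> 'a::euclidean_space set" where
  "cube R = cbox (- (R *\<^sub>R One)) (R *\<^sub>R One)"

lemma lmeasurable_cube [simp]: "cube R \<in> lmeasurable"
  by (simp add: cube_def)

lemma measure_cube:
  assumes "R \<ge> 0"
  shows "measure lebesgue (cube R :: 'a::euclidean_space set) = (2 * R) ^ DIM('a)"
  using assms by (simp add: cube_def inner_add_left)

lemma mem_cube_if_near:
  fixes x y :: "'a::euclidean_space"
  assumes "x \<in> cube (R - r)" "norm (y - x) \<le> r"
  shows "y \<in> cube R"
  unfolding cube_def mem_box(2)
proof (intro ballI)
  fix i :: 'a assume i: "i \<in> Basis"
  have "\<bar>(y - x) \<bullet> i\<bar> \<le> r" using Basis_le_norm[OF i, of "y - x"] assms(2) by linarith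
  moreover have "- (R - r) \<le> x \<bullet> i \<and> x \<bullet> i \<le> R - r"
    using assms(1) i by (auto simp: cube_def mem_box)
  ultimately show "(- (R *\<^sub>R One)) \<bullet> i \<le> y \<bullet> i \<and> y \<bullet> i \<le> (R *\<^sub>R One) \<bullet> i"
    using i by (auto simp: inner_diff_left)
qed

lemma finite_translates_inside:
  fixes P S :: "'a::euclidean_space set"
  assumes "bounded P" "interior P \<noteq> {}" "S \<in> lmeasurable"
    and disj: "\<And>t t'. t \<in> \<Lambda> \<Longrightarrow> t' \<in> \<Lambda> \<Longrightarrow> t \<noteq> t' \<Longrightarrow>
      interior ((+) t ` P) \<inter> interior ((+) t' ` P) = {}"
  shows "finite {t\<in>\<Lambda>. (+) t ` P \<subseteq> S}"
proof -
  let ?m = "measure lebesgue (interior P)"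
  have int_lmeasurable: "interior P \<in> lmeasurable"
    using lmeasurable_interior[OF assms(1)] .
  have "?m \<noteq> 0"
    using open_not_negligible[of "interior P"] assms(2) negligible_iff_measure0[OF int_lmeasurable]
    by simp
  then have m_pos: "?m > 0" using measure_nonneg[of lebesgue "interior P"] by linarith
  have "card G \<le> nat \<lceil>measure lebesgue S / ?m\<rceil>"
    if G: "G \<subseteq> {t\<in>\<Lambda>. (+) t ` P \<subseteq> S}" "finite G" for G
  proof -
    have "real (card G) * ?m = (\<Sum>t\<in>G. measure lebesgue ((+) t ` interior P))"
      by (simp add: measure_translation)
    also have "\<dots> = measure lebesgue (\<Union>t\<in>G. (+) t ` interior P)"
    proof (rule measure_UNION'[symmetric])
      show "pairwise (\<lambda>t t'. disjnt ((+) t ` interior P) ((+) t' ` interior P)) G"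
        using G disj unfolding pairwise_def disjnt_def by (force simp: interior_translation)
    qed (use G int_lmeasurable in \<open>auto intro: measurable_translation\<close>)
    also have "\<dots> \<le> measure lebesgue S"
    proof (rule measure_mono_fmeasurable)
      show "(\<Union>t\<in>G. (+) t ` interior P) \<subseteq> S" using G interior_subset[of P] by blast
      show "(\<Union>t\<in>G. (+) t ` interior P) \<in> sets lebesgue"
        using G(2) fmeasurableD[OF measurable_translation[OF int_lmeasurable]] by blast
    qed (rule assms(3))
    finally have "real (card G) \<le> measure lebesgue S / ?m"
      using m_pos by (simp add: field_simps)
    then show ?thesis by linarith
  qed
  then show ?thesis using finite_if_finite_subsets_card_bdd by blast
qed

lemma measure_half_scaled_interior:
  fixes P :: "'a::euclidean_space set"
  assumes "bounded P" "convex P"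
  shows "measure lebesgue ((*\<^sub>R) (1/2) ` interior P) = measure lebesgue P / 2 ^ DIM('a)"
  using measure_lebesgue_affine[of "1/2" 0 "interior P"]
    measure_interior[OF assms(1) negligible_convex_frontier[OF assms(2)]]
  by (simp add: power_one_over)

lemma lmeasurable_half_tile:
  fixes P :: "'a::euclidean_space set"
  assumes "bounded P"
  shows "(+) t ` ((*\<^sub>R) (1/2) ` interior P) \<in> lmeasurable"
proof (rule lmeasurable_open)
  show "bounded ((+) t ` ((*\<^sub>R) (1/2) ` interior P))"
    using assms by (intro bounded_translation bounded_scaling bounded_interior)
  show "open ((+) t ` ((*\<^sub>R) (1/2) ` interior P))"
    by (intro open_translation open_scaling) auto
qed

lemma cube_covered_by_inner_translates:
  fixes P :: "'a::euclidean_space set"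
  assumes "(\<Union>t\<in>\<Lambda>. (+) t ` P) = UNIV" "\<And>x. x \<in> P \<Longrightarrow> norm x \<le> D"
  shows "cube (R - 2 * D) \<subseteq> (\<Union>t\<in>{t\<in>\<Lambda>. (+) t ` P \<subseteq> cube R}. (+) t ` P)"
proof
  fix x :: 'a assume x: "x \<in> cube (R - 2 * D)"
  obtain t p where t: "t \<in> \<Lambda>" "p \<in> P" "x = t + p" using assms(1) by blast
  have "(+) t ` P \<subseteq> cube R"
  proof
    fix z assume "z \<in> (+) t ` P"
    then obtain q where q: "q \<in> P" "z = t + q" by blast
    have "norm (z - x) \<le> norm q + norm p" using q t by (simp add: norm_triangle_ineq4)
    also have "\<dots> \<le> 2 * D" using assms(2)[OF q(1)] assms(2)[OF t(2)] by simp
    finally show "z \<in> cube R" using mem_cube_if_near[OF x] by blast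
  qed
  then show "x \<in> (\<Union>t\<in>{t\<in>\<Lambda>. (+) t ` P \<subseteq> cube R}. (+) t ` P)" using t by blast
qed

lemma half_tiling_cube_measure:
  fixes P :: "'a::euclidean_space set"
  assumes "compact P" "convex P" "0 \<in> interior P"
    and cover: "(\<Union>t\<in>\<Lambda>. (+) t ` P) = UNIV"
    and disj: "\<And>t t'. t \<in> \<Lambda> \<Longrightarrow> t' \<in> \<Lambda> \<Longrightarrow> t \<noteq> t' \<Longrightarrow>
      interior ((+) t ` P) \<inter> interior ((+) t' ` P) = {}"
    and bound: "\<And>x. x \<in> P \<Longrightarrow> norm x \<le> D"
  shows "measure lebesgue (cube (R - 2 * D) :: 'a set)
    \<le> 2 ^ DIM('a) * measure lebesgue (half_tiling P \<Lambda> \<inter> cube R)"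
proof -
  define L where "L = {t\<in>\<Lambda>. (+) t ` P \<subseteq> cube R}"
  define H where "H t = (+) t ` ((*\<^sub>R) (1/2) ` interior P)" for t
  have bounded: "bounded P" using assms(1) compact_imp_bounded by blast
  have L_fin: "finite L"
    unfolding L_def using finite_translates_inside[OF bounded _ lmeasurable_cube disj] assms(3)
    by blast
  have P_lmeasurable: "(+) t ` P \<in> lmeasurable" for t
    using lmeasurable_compact compact_translation[OF assms(1)] by blast
  have H_sub: "H t \<subseteq> (+) t ` interior P" for t
    unfolding H_def using half_scaled_interior_subset[OF assms(2,3)] by blast
  have H_lmeasurable: "H t \<in> lmeasurable" for t
    unfolding H_def using bounded by (rule lmeasurable_half_tile)
  have "cube (R - 2 * D) \<subseteq> (\<Union>t\<in>L. (+) t ` P)"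
    unfolding L_def using cover bound by (rule cube_covered_by_inner_translates)
  then have "measure lebesgue (cube (R - 2 * D) :: 'a set)
      \<le> measure lebesgue (\<Union>t\<in>L. (+) t ` P)"
    using L_fin P_lmeasurable fmeasurableD[OF lmeasurable_cube]
    by (intro measure_mono_fmeasurable) auto
  also have "\<dots> \<le> (\<Sum>t\<in>L. measure lebesgue ((+) t ` P))"
    using L_fin P_lmeasurable by (intro measure_UNION_le) auto
  also have "\<dots> = 2 ^ DIM('a) * (\<Sum>t\<in>L. measure lebesgue (H t))"
    by (simp add: H_def measure_translation measure_half_scaled_interior[OF bounded assms(2)]
        sum_distrib_left)
  also have "(\<Sum>t\<in>L. measure lebesgue (H t)) = measure lebesgue (\<Union>t\<in>L. H t)"
  proof (rule measure_UNION'[symmetric])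
    show "pairwise (\<lambda>t t'. disjnt (H t) (H t')) L"
      unfolding pairwise_def disjnt_def
    proof (intro ballI impI)
      fix t t' assume "t \<in> L" "t' \<in> L" "t \<noteq> t'"
      then have "(+) t ` interior P \<inter> (+) t' ` interior P = {}"
        using disj by (simp add: L_def interior_translation)
      then show "H t \<inter> H t' = {}" using H_sub[of t] H_sub[of t'] by blast
    qed
  qed (use L_fin H_lmeasurable in auto)
  also have "measure lebesgue (\<Union>t\<in>L. H t) \<le> measure lebesgue (half_tiling P \<Lambda> \<inter> cube R)"
  proof (rule measure_mono_fmeasurable)
    show "(\<Union>t\<in>L. H t) \<subseteq> half_tiling P \<Lambda> \<inter> cube R"
      using H_sub interior_subset[of P] unfolding L_def H_def half_tiling_def by blast
    show "(\<Union>t\<in>L. H t) \<in> sets lebesgue"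
      using L_fin H_lmeasurable by auto
    show "half_tiling P \<Lambda> \<inter> cube R \<in> lmeasurable"
      using fmeasurable_Int_fmeasurable[OF lmeasurable_cube half_tiling_in_sets_lebesgue]
      by (simp add: Int_commute)
  qed
  finally show ?thesis by simp
qed

lemma upper_density_ge_inverse:
  fixes A :: "'a::euclidean_space set"
  assumes "K > 0" "c \<ge> 0"
    and bound: "\<And>R. R \<ge> c \<Longrightarrow>
      measure lebesgue (cube (R - c) :: 'a set) \<le> K * measure lebesgue (A \<inter> cube R)"
  shows "ereal (1 / K) \<le> upper_density A"
proof -
  let ?n = "DIM('a)"
  let ?ratio = "\<lambda>R. measure lebesgue (A \<inter> cube R) / measure lebesgue (cube R :: 'a set)"
  have lower: "((R - c) / R) ^ ?n / K \<le> ?ratio R" if R: "R \<ge> c + 1" for R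
  proof -
    have "(2 * (R - c)) ^ ?n = measure lebesgue (cube (R - c) :: 'a set)"
      using R assms(2) by (simp add: measure_cube)
    also have "\<dots> \<le> K * measure lebesgue (A \<inter> cube R)"
      using bound R assms(2) by simp
    finally have "(2 * (R - c)) ^ ?n \<le> K * measure lebesgue (A \<inter> cube R)" .
    have R_pos: "R > 0" using R assms(2) by linarith
    have "((R - c) / R) ^ ?n / K = (2 * (R - c)) ^ ?n / (K * (2 * R) ^ ?n)"
      using R_pos by (simp only: power_mult_distrib power_divide) simp
    also have "\<dots> \<le> K * measure lebesgue (A \<inter> cube R) / (K * (2 * R) ^ ?n)"
      using \<open>(2 * (R - c)) ^ ?n \<le> _\<close> assms(1) R_pos by (intro divide_right_mono) auto
    also have "\<dots> = ?ratio R"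
      using assms(1) measure_cube[of R, where 'a='a] R_pos by simp
    finally show ?thesis .
  qed
  have "((\<lambda>R. (R - c) / R) \<longlongrightarrow> 1) at_top"
    by real_asymp
  then have "((\<lambda>R. ((R - c) / R) ^ ?n / K) \<longlongrightarrow> 1 ^ ?n / K) at_top"
    using assms(1) by (intro tendsto_intros) auto
  then have "ereal (1 / K) = Limsup at_top (\<lambda>R. ereal (((R - c) / R) ^ ?n / K))"
    by (intro lim_imp_Limsup[symmetric] tendsto_ereal) simp_all
  also have "\<dots> \<le> Limsup at_top (\<lambda>R. ereal (?ratio R))"
  proof (rule Limsup_mono)
    show "\<forall>\<^sub>F R in at_top. ereal (((R - c) / R) ^ ?n / K) \<le> ereal (?ratio R)"
      using eventually_ge_at_top[of "c + 1"] by eventually_elim (simp add: lower)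
  qed
  also have "\<dots> = upper_density A"
    by (simp add: upper_density_def cube_def)
  finally show ?thesis .
qed

theorem proposition1:
  fixes P :: "'a::euclidean_space set"
  assumes "polytope P"
    and "convex P"
    and "uminus ` P = P"
    and "interior P \<noteq> {}"
    and "tiles_by_translation P"
  shows "m1 (gauge_norm P) \<ge> ereal (1 / 2 ^ DIM('a))"
proof -
  obtain \<Lambda> where cover: "(\<Union>t\<in>\<Lambda>. (+) t ` P) = UNIV"
    and disj: "\<And>t t'. t \<in> \<Lambda> \<Longrightarrow> t' \<in> \<Lambda> \<Longrightarrow> t \<noteq> t' \<Longrightarrow>
      interior ((+) t ` P) \<inter> interior ((+) t' ` P) = {}"
    using assms(5) unfolding tiles_by_translation_def by blast
  have compact: "compact P" using assms(1) polytope_imp_compact by blast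
  then obtain D where D: "D > 0" "\<And>x. x \<in> P \<Longrightarrow> norm x \<le> D"
    using compact_imp_bounded bounded_pos by metis
  have "0 \<in> interior P" using zero_in_interior_if_symmetric assms(2-4) by blast
  then have "ereal (1 / 2 ^ DIM('a)) \<le> upper_density (half_tiling P \<Lambda>)"
    using half_tiling_cube_measure[OF compact assms(2) _ cover disj D(2)] D(1)
    by (intro upper_density_ge_inverse[of _ "2 * D"]) auto
  also have "\<dots> \<le> m1 (gauge_norm P)"
    unfolding m1_def
    using half_tiling_in_sets_lebesgue
      half_tiling_avoids_distance_one[OF compact_imp_closed[OF compact] assms(2-4) disj]
    by (blast intro: Sup_upper)
  finally show ?thesis .
qed

end
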